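(* Let $\mathcal X=\{1,\ldots,n\}$, let $N>1$ be an integer, and let $M=[m_{ij}]$ be an $n\times n$ matrix with nonnegative entries such that all entries of $M^N$ are positive. Let $\lambda_M$ be the spectral radius of $M$, $\phi,\hat\phi$ right and left eigenvectors of $M$ for $\lambda_M$ with positive entries normalized so that $\sum_x\phi(x)\hat\phi(x)=1$, $\bar\nu(x)=\phi(x)\hat\phi(x)$ and $\bar\Pi=\lambda_M^{-1}\operatorname{diag}(\phi)^{-1}M\operatorname{diag}(\phi)$. Let $\mu_0$ be a measure on $\mathcal X$ with $\mu_0(x)>0$ for all $x$, and let $\mathfrak M(2N)$ be the measure on $\mathcal X^{2N+1}$ given by $\mathfrak M(2N)(x_0,\ldots,x_{2N})=\mu_0(x_0)\prod_{t=0}^{2N-1}m_{x_tx_{t+1}}$. Let $\nu$ be a probability measure on $\mathcal X$ and let $\mathfrak M^*[\nu,\nu](2N)$ be the Schrödinger bridge, i.e. the minimizer of $\mathbb D(P\|\mathfrak M(2N))$ over probability distributions $P$ on $\mathcal X^{2N+1}$ whose marginals at times $0$ and $2N$ both equal $\nu$. Suppose that the (Markovian) transition matrix $\Pi_\nu$ of $\mathfrak M^*[\nu,\nu](2N)$ does not depend on time. Then $\nu=\bar\nu$ and $\Pi_\nu=\bar\Pi$.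
   Context: Relative entropy of a probability distribution $P$ with respect to a nonnegative measure $Q$ on a finite set: $\mathbb D(P\|Q)=\sum_x P(x)\log\frac{P(x)}{Q(x)}$ if $\mathrm{supp}(P)\subseteq\mathrm{supp}(Q)$ (with $0\log0=0$), and $+\infty$ otherwise. The Schrödinger bridge exists, is unique, and is a (possibly time-inhomogeneous) Markov measure. *)

theory Defs
  imports "HOL-Analysis.Analysis" "HOL-Library.FuncSet"
    "Jordan_Normal_Form.Matrix" "Jordan_Normal_Form.Spectral_Radius"
begin

definition rel_entropy :: "'a set \<Rightarrow> ('a \<Rightarrow> real) \<Rightarrow> ('a \<Rightarrow> real) \<Rightarrow> ereal" where
  "rel_entropy S P Q =
     (if (\<forall>x\<in>S. P x \<noteq> 0 \<longrightarrow> Q x \<noteq> 0)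
      then ereal (\<Sum>x\<in>S. if P x = 0 then 0 else P x * ln (P x / Q x))
      else \<infinity>)"

definition paths :: "nat \<Rightarrow> nat \<Rightarrow> (nat \<Rightarrow> nat) set" where
  "paths n T = PiE {0..T} (\<lambda>_. {..<n})"

definition ref_measure :: "real mat \<Rightarrow> (nat \<Rightarrow> real) \<Rightarrow> nat \<Rightarrow> (nat \<Rightarrow> nat) \<Rightarrow> real" where
  "ref_measure M mu0 T x = mu0 (x 0) * (\<Prod>t<T. M $$ (x t, x (Suc t)))"

definition prob_dist_on :: "'a set \<Rightarrow> ('a \<Rightarrow> real) \<Rightarrow> bool" where
  "prob_dist_on S P \<longleftrightarrow> (\<forall>x\<in>S. 0 \<le> P x) \<and> (\<Sum>x\<in>S. P x) = 1"

definition marginal :: "nat \<Rightarrow> nat \<Rightarrow> ((nat \<Rightarrow> nat) \<Rightarrow> real) \<Rightarrow> nat \<Rightarrow> nat \<Rightarrow> real" where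
  "marginal n T P t y = (\<Sum>x\<in>{x\<in>paths n T. x t = y}. P x)"

definition bridge_admissible ::
  "nat \<Rightarrow> nat \<Rightarrow> (nat \<Rightarrow> real) \<Rightarrow> (nat \<Rightarrow> real) \<Rightarrow> ((nat \<Rightarrow> nat) \<Rightarrow> real) \<Rightarrow> bool" where
  "bridge_admissible n T nu0 nu1 P \<longleftrightarrow>
     prob_dist_on (paths n T) P \<and>
     (\<forall>y<n. marginal n T P 0 y = nu0 y) \<and> (\<forall>y<n. marginal n T P T y = nu1 y)"

definition is_schroedinger_bridge ::
  "nat \<Rightarrow> nat \<Rightarrow> ((nat \<Rightarrow> nat) \<Rightarrow> real) \<Rightarrow> (nat \<Rightarrow> real) \<Rightarrow> (nat \<Rightarrow> real) \<Rightarrow> ((nat \<Rightarrow> nat) \<Rightarrow> real) \<Rightarrow> bool" where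
  "is_schroedinger_bridge n T R nu0 nu1 P \<longleftrightarrow>
     bridge_admissible n T nu0 nu1 P \<and>
     (\<forall>P'. bridge_admissible n T nu0 nu1 P' \<longrightarrow>
        rel_entropy (paths n T) P R \<le> rel_entropy (paths n T) P' R)"

definition stochastic_matrix :: "nat \<Rightarrow> (nat \<Rightarrow> nat \<Rightarrow> real) \<Rightarrow> bool" where
  "stochastic_matrix n Tr \<longleftrightarrow> (\<forall>x<n. \<forall>y<n. 0 \<le> Tr x y) \<and> (\<forall>x<n. (\<Sum>y<n. Tr x y) = 1)"

end

theory Submission
  imports Defs
begin

text \<open>
  The bridge minimises relative entropy, so moving a little mass between two paths with the same
  endpoints cannot lower it. To first order this forces P/R to depend on the endpoints only, and
  P to charge every path that R charges. For a time-homogeneous bridge, P/R is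
  \<nu>(x_0)/\<mu>_0(x_0) times the product of \<Pi>(x,y)/m(x,y) along the path, so these products over
  walks of length 2N depend on the endpoints only; as M^N is positive this yields
  \<Pi>(x,y) = c m(x,y) p(y)/p(x). Row-stochasticity makes p a positive right eigenvector of M, so
  p is proportional to \<phi> and c = 1/\<lambda>_M: \<Pi> is the Doob transform of M. Finally \<nu> is
  invariant under \<Pi>^(2N) because both end marginals equal \<nu>, and the unique invariant law of
  this primitive chain is \<phi> times the left eigenvector.
\<close>

section \<open>Walks of positive weight\<close>

definition walk :: "nat \<Rightarrow> (nat \<Rightarrow> nat \<Rightarrow> real) \<Rightarrow> nat \<Rightarrow> (nat \<Rightarrow> nat) \<Rightarrow> bool" where
  "walk n A L w \<longleftrightarrow> (\<forall>t\<le>L. w t < n) \<and> (\<forall>t<L. 0 < A (w t) (w (Suc t)))"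

definition walk_weight :: "(nat \<Rightarrow> nat \<Rightarrow> real) \<Rightarrow> nat \<Rightarrow> (nat \<Rightarrow> nat) \<Rightarrow> real" where
  "walk_weight A L w = (\<Prod>t<L. A (w t) (w (Suc t)))"

definition walk_connected :: "nat \<Rightarrow> (nat \<Rightarrow> nat \<Rightarrow> real) \<Rightarrow> nat \<Rightarrow> bool" where
  "walk_connected n A L \<longleftrightarrow> (\<forall>i<n. \<forall>j<n. \<exists>w. walk n A L w \<and> w 0 = i \<and> w L = j)"

definition join_at :: "(nat \<Rightarrow> nat) \<Rightarrow> nat \<Rightarrow> (nat \<Rightarrow> nat) \<Rightarrow> nat \<Rightarrow> nat" where
  "join_at u L v = (\<lambda>t. if t \<le> L then u t else v (t - L))"

definition prepend :: "nat \<Rightarrow> (nat \<Rightarrow> nat) \<Rightarrow> nat \<Rightarrow> nat" where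
  "prepend x v = (\<lambda>t. if t = 0 then x else v (t - 1))"

lemma walk_range: "walk n A L w \<Longrightarrow> t \<le> L \<Longrightarrow> w t < n"
  by (simp add: walk_def)

lemma walk_step: "walk n A L w \<Longrightarrow> t < L \<Longrightarrow> 0 < A (w t) (w (Suc t))"
  by (simp add: walk_def)

lemma walk_mono: "walk n A L w \<Longrightarrow> L' \<le> L \<Longrightarrow> walk n A L' w"
  by (auto simp: walk_def)

lemma walk_restrict [simp]: "walk n A L (restrict w {0..L}) = walk n A L w"
  by (auto simp: walk_def)

lemma walk_weight_restrict [simp]: "walk_weight A L (restrict w {0..L}) = walk_weight A L w"
  unfolding walk_weight_def by (intro prod.cong) auto

lemma walk_weight_Suc: "walk_weight A (Suc L) w = walk_weight A L w * A (w L) (w (Suc L))"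
  by (simp add: walk_weight_def)

lemma walk_weight_nonneg:
  "(\<And>t. t \<le> L \<Longrightarrow> w t < n) \<Longrightarrow> \<forall>i<n. \<forall>j<n. 0 \<le> A i j \<Longrightarrow> 0 \<le> walk_weight A L w"
  unfolding walk_weight_def by (intro prod_nonneg) auto

lemma walk_weight_pos:
  "walk n B L w \<Longrightarrow> \<forall>i<n. \<forall>j<n. 0 < B i j \<longrightarrow> 0 < A i j \<Longrightarrow> 0 < walk_weight A L w"
  unfolding walk_weight_def walk_def by (intro prod_pos) auto

lemma walk_weight_pos_iff:
  assumes "\<And>t. t \<le> L \<Longrightarrow> w t < n" and "\<forall>i<n. \<forall>j<n. 0 \<le> A i j"
  shows "0 < walk_weight A L w \<longleftrightarrow> walk n A L w"
proof
  assume "0 < walk_weight A L w"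
  then have "walk_weight A L w \<noteq> 0" by simp
  then have "\<forall>t<L. A (w t) (w (Suc t)) \<noteq> 0"
    by (auto simp: walk_weight_def)
  with assms show "walk n A L w"
    by (auto simp: walk_def order.strict_iff_order)
qed (auto intro: walk_weight_pos)

lemma join_at_le [simp]: "t \<le> L \<Longrightarrow> join_at u L v t = u t"
  by (simp add: join_at_def)

lemma join_at_double_end [simp]: "u L = v 0 \<Longrightarrow> join_at u L v (2 * L) = v L"
  by (auto simp: join_at_def)

lemma walk_join_at:
  assumes u: "walk n A L u" and v: "walk n A L' v" and uv: "u L = v 0"
  shows "walk n A (L + L') (join_at u L v)"
  unfolding walk_def
proof (intro conjI allI impI)
  fix t assume "t \<le> L + L'"
  with u v show "join_at u L v t < n"
    by (auto simp: walk_def join_at_def)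
next
  fix t assume t: "t < L + L'"
  show "0 < A (join_at u L v t) (join_at u L v (Suc t))"
  proof (cases "t < L")
    case True
    with u show ?thesis by (auto simp: walk_def join_at_def)
  next
    case False
    then obtain s where "t = L + s" "s < L'"
      using t by (metis add_less_cancel_left le_Suc_ex not_less)
    with v uv show ?thesis by (auto simp: walk_def join_at_def)
  qed
qed

lemma walk_join_at_double:
  "walk n A L u \<Longrightarrow> walk n A L v \<Longrightarrow> u L = v 0 \<Longrightarrow> walk n A (2 * L) (join_at u L v)"
  using walk_join_at[of n A L u L v] by (simp add: mult_2)

lemma walk_weight_join_at:
  assumes "u L = v 0"
  shows "walk_weight A (L + L') (join_at u L v) = walk_weight A L u * walk_weight A L' v"
proof (induction L')
  case 0
  show ?case by (simp add: walk_weight_def join_at_def)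
next
  case (Suc L')
  have "join_at u L v (L + L') = v L'" "join_at u L v (Suc (L + L')) = v (Suc L')"
    using assms by (auto simp: join_at_def)
  with Suc.IH show ?case
    by (simp add: walk_weight_Suc)
qed

lemma walk_weight_join_at_double:
  "u L = v 0 \<Longrightarrow> walk_weight A (2 * L) (join_at u L v) = walk_weight A L u * walk_weight A L v"
  using walk_weight_join_at[of u L v A L] by (simp add: mult_2)

lemma prepend_0 [simp]: "prepend x v 0 = x"
  and prepend_Suc [simp]: "prepend x v (Suc t) = v t"
  by (auto simp: prepend_def)

lemma walk_prepend:
  "walk n A L v \<Longrightarrow> x < n \<Longrightarrow> 0 < A x (v 0) \<Longrightarrow> walk n A (Suc L) (prepend x v)"
  unfolding walk_def by (auto simp: prepend_def less_Suc_eq_0_disj le_Suc_eq)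

lemma walk_weight_prepend: "walk_weight A (Suc L) (prepend x v) = A x (v 0) * walk_weight A L v"
  unfolding walk_weight_def prod.lessThan_Suc_shift by simp

lemma walk_shift: "walk n A (Suc L) w \<Longrightarrow> walk n A L (\<lambda>t. w (Suc t))"
  by (auto simp: walk_def)

lemma walk_weight_shift:
  "walk_weight A (Suc L) w = A (w 0) (w (Suc 0)) * walk_weight A L (\<lambda>t. w (Suc t))"
  unfolding walk_weight_def prod.lessThan_Suc_shift by simp

lemma walk_connected_double:
  assumes "walk_connected n A L"
  shows "walk_connected n A (2 * L)"
  unfolding walk_connected_def
proof (intro allI impI)
  fix i j assume "i < n" "j < n"
  with assms obtain u v where "walk n A L u" "u 0 = i" "u L = 0" "walk n A L v" "v 0 = 0" "v L = j"
    unfolding walk_connected_def by (metis gr_zeroI not_less0)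
  then show "\<exists>w. walk n A (2 * L) w \<and> w 0 = i \<and> w (2 * L) = j"
    by (intro exI[of _ "join_at u L v"]) (simp add: walk_join_at_double)
qed

lemma walk_connected_from:
  "walk_connected n A L \<Longrightarrow> y < n \<Longrightarrow> L' \<le> L \<Longrightarrow> \<exists>v. walk n A L' v \<and> v 0 = y"
  unfolding walk_connected_def by (meson walk_mono)

lemma walk_of_mat_pow_pos:
  assumes M: "M \<in> carrier_mat n n" and nonneg: "\<forall>i<n. \<forall>j<n. 0 \<le> M $$ (i, j)"
    and ij: "i < n" "j < n" "0 < (M ^\<^sub>m k) $$ (i, j)"
  shows "\<exists>w. walk n (\<lambda>a b. M $$ (a, b)) k w \<and> w 0 = i \<and> w k = j"
  using ij
proof (induction k arbitrary: j)
  case 0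
  then have "i = j" using M by (auto simp: one_mat_def split: if_splits)
  with 0 show ?case by (intro exI[of _ "\<lambda>_. i"]) (auto simp: walk_def)
next
  case (Suc k)
  have "(M ^\<^sub>m Suc k) $$ (i, j) = (\<Sum>c<n. (M ^\<^sub>m k) $$ (i, c) * M $$ (c, j))"
    using Suc.prems M by (simp add: scalar_prod_def lessThan_atLeast0 mult.commute)
  with Suc.prems obtain c where c: "c < n" "0 < (M ^\<^sub>m k) $$ (i, c) * M $$ (c, j)"
    by (metis (no_types, lifting) lessThan_iff not_less sum_nonpos)
  moreover have "0 \<le> M $$ (c, j)"
    using nonneg c(1) Suc.prems by auto
  ultimately have "0 < M $$ (c, j)" "0 < (M ^\<^sub>m k) $$ (i, c)"
    by (auto simp: zero_less_mult_iff)
  with Suc.IH[of c] c obtain w where "walk n (\<lambda>a b. M $$ (a, b)) k w" "w 0 = i" "w k = c"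
    using Suc.prems by blast
  with \<open>0 < M $$ (c, j)\<close> Suc.prems show ?case
    by (intro exI[of _ "w(Suc k := j)"]) (auto simp: walk_def le_Suc_eq less_Suc_eq)
qed

lemma walk_connected_mat_pow:
  assumes "M \<in> carrier_mat n n" "\<forall>i<n. \<forall>j<n. 0 \<le> M $$ (i, j)"
    and "\<forall>i<n. \<forall>j<n. 0 < (M ^\<^sub>m k) $$ (i, j)"
  shows "walk_connected n (\<lambda>a b. M $$ (a, b)) k"
  using assms walk_of_mat_pow_pos unfolding walk_connected_def by blast

section \<open>Sums over paths\<close>

lemma finite_paths: "finite (paths n L)"
  unfolding paths_def by (intro finite_PiE) auto

lemma paths_range: "x \<in> paths n L \<Longrightarrow> t \<le> L \<Longrightarrow> x t < n"
  by (auto simp: paths_def PiE_iff)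

lemma restrict_in_paths: "(\<And>t. t \<le> L \<Longrightarrow> w t < n) \<Longrightarrow> restrict w {0..L} \<in> paths n L"
  by (auto simp: paths_def PiE_iff)

lemma walk_restrict_in_paths: "walk n A L w \<Longrightarrow> restrict w {0..L} \<in> paths n L"
  by (intro restrict_in_paths) (auto simp: walk_def)

fun evolve :: "nat \<Rightarrow> (nat \<Rightarrow> nat \<Rightarrow> real) \<Rightarrow> (nat \<Rightarrow> real) \<Rightarrow> nat \<Rightarrow> nat \<Rightarrow> real" where
  "evolve n A f 0 = f"
| "evolve n A f (Suc t) = (\<lambda>b. \<Sum>c<n. evolve n A f t c * A c b)"

lemma paths_Suc_ending_at:
  assumes "b < n"
  shows "{x \<in> paths n (Suc L). x (Suc L) = b} = (\<lambda>g. g(Suc L := b)) ` paths n L"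
proof -
  have "{0..Suc L} = insert (Suc L) {0..L}" by auto
  then have "paths n (Suc L) = (\<lambda>(y, g). g(Suc L := y)) ` ({..<n} \<times> paths n L)"
    unfolding paths_def by (simp add: PiE_insert_eq)
  with assms show ?thesis by force
qed

lemma sum_paths_ending_at:
  "b < n \<Longrightarrow> (\<Sum>x\<in>{x\<in>paths n L. x L = b}. f (x 0) * walk_weight A L x) = evolve n A f L b"
proof (induction L arbitrary: b)
  case 0
  then have "{x\<in>paths n 0. x 0 = b} = {\<lambda>t\<in>{0..0}. b}"
    by (auto simp: paths_def PiE_iff extensional_def fun_eq_iff)
  then show ?case by (simp add: walk_weight_def)
next
  case (Suc L)
  have "inj_on (\<lambda>(y, g). g(Suc L := y)) ({..<n} \<times> paths n L)"
    unfolding paths_def by (rule inj_combinator) simp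
  then have "inj_on (\<lambda>(y, g). g(Suc L := y)) ({b} \<times> paths n L)"
    by (rule inj_on_subset) (use Suc.prems in auto)
  then have inj: "inj_on (\<lambda>g. g(Suc L := b)) (paths n L)"
    by (auto simp: inj_on_def)
  have "(\<Sum>x\<in>{x\<in>paths n (Suc L). x (Suc L) = b}. f (x 0) * walk_weight A (Suc L) x)
      = (\<Sum>g\<in>paths n L. f (g 0) * walk_weight A L g * A (g L) b)"
  proof (subst paths_Suc_ending_at[OF Suc.prems], subst sum.reindex[OF inj], intro sum.cong refl)
    fix g :: "nat \<Rightarrow> nat"
    have "walk_weight A L (g(Suc L := b)) = walk_weight A L g"
      unfolding walk_weight_def by (intro prod.cong) auto
    then show "((\<lambda>x. f (x 0) * walk_weight A (Suc L) x) \<circ> (\<lambda>g. g(Suc L := b))) g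
        = f (g 0) * walk_weight A L g * A (g L) b"
      by (simp add: walk_weight_Suc)
  qed
  also have "\<dots> = (\<Sum>c<n. \<Sum>g\<in>{g\<in>paths n L. g L = c}. f (g 0) * walk_weight A L g * A c b)"
    by (subst sum.group[symmetric, OF finite_paths finite_lessThan, of "\<lambda>g. g L"])
      (auto simp: paths_range intro!: sum.cong)
  also have "\<dots> = evolve n A f (Suc L) b"
    by (auto simp: Suc.IH[symmetric] sum_distrib_right intro!: sum.cong)
  finally show ?case .
qed

lemma evolve_diff: "evolve n A (\<lambda>c. f c - s * g c) t b = evolve n A f t b - s * evolve n A g t b"
  by (induction t arbitrary: b)
    (simp_all add: left_diff_distrib sum_subtractf sum_distrib_left mult.assoc)

lemma evolve_nonneg:
  "\<forall>c<n. 0 \<le> f c \<Longrightarrow> \<forall>i<n. \<forall>j<n. 0 \<le> A i j \<Longrightarrow> b < n \<Longrightarrow> 0 \<le> evolve n A f t b"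
  by (induction t arbitrary: b) (auto intro!: sum_nonneg)

lemma evolve_ge_walk_weight:
  assumes f: "\<forall>c<n. 0 \<le> f c" and A: "\<forall>i<n. \<forall>j<n. 0 \<le> A i j" and w: "\<And>s. s \<le> t \<Longrightarrow> w s < n"
  shows "f (w 0) * walk_weight A t w \<le> evolve n A f t (w t)"
  using w
proof (induction t)
  case 0
  then show ?case by (simp add: walk_weight_def)
next
  case (Suc t)
  have r: "w t < n" "w (Suc t) < n" using Suc.prems by auto
  have "f (w 0) * walk_weight A (Suc t) w = f (w 0) * walk_weight A t w * A (w t) (w (Suc t))"
    by (simp add: walk_weight_Suc)
  also have "\<dots> \<le> evolve n A f t (w t) * A (w t) (w (Suc t))"
    using Suc r A by (intro mult_right_mono) auto
  also have "\<dots> \<le> (\<Sum>c<n. evolve n A f t c * A c (w (Suc t)))"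
    using r A evolve_nonneg[OF f A]
    by (intro member_le_sum[where f = "\<lambda>c. evolve n A f t c * A c (w (Suc t))"]) auto
  finally show ?case by simp
qed

lemma sum_paths_group:
  "s \<le> L \<Longrightarrow> A \<subseteq> paths n L \<Longrightarrow> sum f A = (\<Sum>b<n. sum f {x\<in>A. x s = b})"
  by (intro sum.group[symmetric]) (auto intro: finite_subset[OF _ finite_paths] paths_range)

lemma ex_min_index: "0 < (n::nat) \<Longrightarrow> \<exists>i0<n. \<forall>i<n. (r i0 :: real) \<le> r i"
proof -
  assume "0 < n"
  then have "Min (r ` {..<n}) \<in> r ` {..<n}"
    by (intro Min_in) auto
  then obtain i0 where "i0 < n" "r i0 = Min (r ` {..<n})"
    by auto
  then show ?thesis by auto
qed

text \<open>Subtracting the largest multiple of g that stays below f leaves a nonnegative invariant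
  vector with a zero; positivity of the walks into that zero forces it to vanish.\<close>
lemma evolve_invariant_unique:
  assumes A: "\<forall>i<n. \<forall>j<n. 0 \<le> A i j" and conn: "walk_connected n A L"
    and f: "\<forall>b<n. evolve n A f L b = f b" and g: "\<forall>b<n. evolve n A g L b = g b"
    and g_pos: "\<forall>i<n. 0 < g i" and mass: "(\<Sum>i<n. f i) = (\<Sum>i<n. g i)"
  shows "\<forall>i<n. f i = g i"
proof (cases "n = 0")
  case False
  then obtain i0 where i0: "i0 < n" "\<forall>i<n. f i0 / g i0 \<le> f i / g i"
    using ex_min_index[of n "\<lambda>i. f i / g i"] by auto
  define s where "s = f i0 / g i0"
  define d where "d i = f i - s * g i" for i
  have d_nonneg: "\<forall>i<n. 0 \<le> d i"
  proof (intro allI impI)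
    fix i assume "i < n"
    with i0 g_pos have "s \<le> f i / g i" "0 < g i" by (auto simp: s_def)
    then show "0 \<le> d i" by (simp add: d_def le_divide_eq)
  qed
  have "d i0 = 0"
    using g_pos i0(1) by (auto simp: d_def s_def)
  have d_inv: "evolve n A d L i0 = d i0"
    using f g i0(1) unfolding d_def evolve_diff by simp
  have d_zero: "d y = 0" if y: "y < n" for y
  proof -
    obtain w where w: "walk n A L w" "w 0 = y" "w L = i0"
      using conn y i0(1) unfolding walk_connected_def by blast
    have "d y * walk_weight A L w \<le> 0"
      using evolve_ge_walk_weight[OF d_nonneg A, of L w] walk_range[OF w(1)] w d_inv \<open>d i0 = 0\<close>
      by simp
    moreover have "0 < walk_weight A L w"
      using w(1) by (rule walk_weight_pos) auto
    ultimately show ?thesis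
      using d_nonneg y by (simp add: mult_le_0_iff order_antisym)
  qed
  have "(\<Sum>i<n. g i) = s * (\<Sum>i<n. g i)"
    using mass d_zero by (simp add: d_def sum_distrib_left)
  moreover have "0 < (\<Sum>i<n. g i)"
    using False g_pos by (intro sum_pos) auto
  ultimately have "s = 1" by simp
  with d_zero show ?thesis by (simp add: d_def)
qed simp

section \<open>Positive eigenvectors of nonnegative kernels\<close>

lemma pos_left_right_eigenvalues_eq:
  fixes A :: "nat \<Rightarrow> nat \<Rightarrow> real"
  assumes "0 < n"
    and u: "\<forall>i<n. 0 < u i" "\<forall>j<n. (\<Sum>i<n. u i * A i j) = lam * u j"
    and v: "\<forall>i<n. 0 < v i" "\<forall>i<n. (\<Sum>j<n. A i j * v j) = c * v i"
  shows "c = lam"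
proof -
  have "c * (\<Sum>i<n. u i * v i) = (\<Sum>i<n. u i * (\<Sum>j<n. A i j * v j))"
    using v(2) by (simp add: sum_distrib_left mult_ac)
  also have "\<dots> = (\<Sum>i<n. \<Sum>j<n. u i * A i j * v j)"
    by (simp add: sum_distrib_left mult.assoc)
  also have "\<dots> = (\<Sum>j<n. \<Sum>i<n. u i * A i j * v j)"
    by (rule sum.swap)
  also have "\<dots> = (\<Sum>j<n. (\<Sum>i<n. u i * A i j) * v j)"
    by (simp add: sum_distrib_right)
  also have "\<dots> = lam * (\<Sum>i<n. u i * v i)"
    using u(2) by (simp add: sum_distrib_left mult_ac)
  finally have "c * (\<Sum>i<n. u i * v i) = lam * (\<Sum>i<n. u i * v i)" .
  moreover have "0 < (\<Sum>i<n. u i * v i)"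
    using assms by (intro sum_pos) auto
  ultimately show ?thesis by simp
qed

lemma eigenvector_zero_along_walk:
  assumes A: "\<forall>i<n. \<forall>j<n. 0 \<le> A i j" and d: "\<forall>i<n. 0 \<le> d i"
    and eig: "\<forall>i<n. (\<Sum>j<n. A i j * d j) = c * d i"
    and "walk n A L w" "d (w 0) = 0"
  shows "d (w L) = 0"
  using assms(4)
proof (induction L)
  case (Suc L)
  then have "d (w L) = 0" "w L < n" "w (Suc L) < n" "0 < A (w L) (w (Suc L))"
    by (auto simp: walk_def)
  then have "(\<Sum>j<n. A (w L) j * d j) = 0"
    using eig by simp
  then have "A (w L) (w (Suc L)) * d (w (Suc L)) = 0"
    using A d \<open>w L < n\<close> \<open>w (Suc L) < n\<close> by (subst (asm) sum_nonneg_eq_0_iff) auto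
  with \<open>0 < A (w L) (w (Suc L))\<close> show ?case by simp
qed (use assms in simp)

lemma pos_eigenvector_unique:
  assumes "0 < n" and A: "\<forall>i<n. \<forall>j<n. 0 \<le> A i j" and conn: "walk_connected n A L"
    and phi: "\<forall>i<n. 0 < phi i" "\<forall>i<n. (\<Sum>j<n. A i j * phi j) = c * phi i"
    and v: "\<forall>i<n. (\<Sum>j<n. A i j * v j) = c * v i"
  shows "\<exists>s. \<forall>i<n. v i = s * phi i"
proof -
  obtain i0 where i0: "i0 < n" "\<forall>i<n. v i0 / phi i0 \<le> v i / phi i"
    using ex_min_index[OF \<open>0 < n\<close>, of "\<lambda>i. v i / phi i"] by auto
  define s where "s = v i0 / phi i0"
  define d where "d i = v i - s * phi i" for i
  have d_nonneg: "\<forall>i<n. 0 \<le> d i"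
  proof (intro allI impI)
    fix i assume "i < n"
    with i0 phi(1) have "s \<le> v i / phi i" "0 < phi i" by (auto simp: s_def)
    then show "0 \<le> d i" by (simp add: d_def le_divide_eq)
  qed
  have d_eig: "\<forall>i<n. (\<Sum>j<n. A i j * d j) = c * d i"
  proof (intro allI impI)
    fix i assume "i < n"
    have "(\<Sum>j<n. A i j * d j) = (\<Sum>j<n. A i j * v j) - s * (\<Sum>j<n. A i j * phi j)"
      by (simp add: d_def right_diff_distrib sum_subtractf sum_distrib_left mult.left_commute)
    with phi(2) v \<open>i < n\<close> show "(\<Sum>j<n. A i j * d j) = c * d i"
      by (simp add: d_def right_diff_distrib)
  qed
  have "d i0 = 0"
    using phi(1) i0(1) by (auto simp: d_def s_def)
  have "d y = 0" if "y < n" for y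
  proof -
    obtain w where "walk n A L w" "w 0 = i0" "w L = y"
      using conn i0(1) \<open>y < n\<close> unfolding walk_connected_def by blast
    then show ?thesis
      using eigenvector_zero_along_walk[OF A d_nonneg d_eig] \<open>d i0 = 0\<close> by metis
  qed
  then show ?thesis by (auto simp: d_def)
qed

lemma doob_transform_unique:
  assumes "0 < n" and A: "\<forall>i<n. \<forall>j<n. 0 \<le> A i j" and conn: "walk_connected n A L"
    and phi: "\<forall>i<n. 0 < phi i" "\<forall>i<n. (\<Sum>j<n. A i j * phi j) = lam * phi i"
    and phihat: "\<forall>i<n. 0 < phihat i" "\<forall>j<n. (\<Sum>i<n. phihat i * A i j) = lam * phihat j"
    and stoch: "stochastic_matrix n Tr" and p: "\<forall>i<n. 0 < p i"
    and gauge: "\<forall>x<n. \<forall>y<n. Tr x y = A x y * c * p y / p x"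
  shows "\<forall>x<n. \<forall>y<n. Tr x y = A x y * phi y / (lam * phi x)"
proof -
  have p_eig: "\<forall>i<n. (\<Sum>j<n. A i j * p j) = (1 / c) * p i"
  proof (intro allI impI)
    fix i assume i: "i < n"
    have "1 = (\<Sum>j<n. Tr i j)"
      using stoch i by (simp add: stochastic_matrix_def)
    also have "\<dots> = (\<Sum>j<n. c / p i * (A i j * p j))"
      using gauge i by (intro sum.cong refl) simp
    also have "\<dots> = c / p i * (\<Sum>j<n. A i j * p j)"
      by (simp add: sum_distrib_left)
    finally show "(\<Sum>j<n. A i j * p j) = (1 / c) * p i"
      using p i by (cases "c = 0") (auto simp: field_simps)
  qed
  have lam: "1 / c = lam"
    using pos_left_right_eigenvalues_eq[OF \<open>0 < n\<close> phihat p p_eig] .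
  obtain s where s: "\<forall>i<n. p i = s * phi i"
    using pos_eigenvector_unique[OF \<open>0 < n\<close> A conn phi(1), of "1 / c" p] phi(2) p_eig lam by auto
  have "s \<noteq> 0"
    using s p \<open>0 < n\<close> by auto
  show ?thesis
    using gauge s lam \<open>s \<noteq> 0\<close> by (auto simp: field_simps)
qed

lemma doob_transform_invariant:
  assumes phi: "\<forall>i<n. 0 < phi i"
    and phihat: "\<forall>j<n. (\<Sum>i<n. phihat i * A i j) = lam * phihat j"
    and stoch: "stochastic_matrix n Tr"
    and doob: "\<forall>x<n. \<forall>y<n. Tr x y = A x y * phi y / (lam * phi x)"
    and b: "b < n"
  shows "evolve n Tr (\<lambda>i. phi i * phihat i) t b = phi b * phihat b"
proof -
  have "lam \<noteq> 0"
  proof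
    assume "lam = 0"
    then have "(\<Sum>y<n. Tr b y) = 0" using doob b by simp
    with stoch b show False by (simp add: stochastic_matrix_def)
  qed
  show ?thesis
    using b
  proof (induction t arbitrary: b)
    case (Suc t)
    have "evolve n Tr (\<lambda>i. phi i * phihat i) (Suc t) b = (\<Sum>c<n. phi c * phihat c * Tr c b)"
      by (auto simp: Suc.IH intro!: sum.cong)
    also have "\<dots> = (\<Sum>c<n. phi b / lam * (phihat c * A c b))"
    proof (intro sum.cong refl)
      fix c assume "c \<in> {..<n}"
      then have "phi c \<noteq> 0" "Tr c b = A c b * phi b / (lam * phi c)"
        using phi doob Suc.prems by (auto simp: less_imp_neq[symmetric])
      with \<open>lam \<noteq> 0\<close> show "phi c * phihat c * Tr c b = phi b / lam * (phihat c * A c b)"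
        by (simp add: field_simps)
    qed
    also have "\<dots> = phi b / lam * (\<Sum>c<n. phihat c * A c b)"
      by (simp add: sum_distrib_left)
    also have "\<dots> = phi b * phihat b"
      using phihat Suc.prems \<open>lam \<noteq> 0\<close> by simp
    finally show ?case .
  qed simp
qed

section \<open>First-order optimality of the Schroedinger bridge\<close>

definition ent_term :: "real \<Rightarrow> real \<Rightarrow> real" where
  "ent_term u r = (if u = 0 then 0 else u * ln (u / r))"

lemma rel_entropy_eq_sum:
  "\<forall>x\<in>S. P x \<noteq> 0 \<longrightarrow> Q x \<noteq> 0 \<Longrightarrow> rel_entropy S P Q = ereal (\<Sum>x\<in>S. ent_term (P x) (Q x))"
  by (simp add: rel_entropy_def ent_term_def)

lemma ent_term_perturb_le:
  fixes a r e :: real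
  assumes "0 < a" "0 < r" "0 < a + e"
  shows "ent_term (a + e) r \<le> ent_term a r + e * (ln (a / r) + 1) + e\<^sup>2 / a"
proof -
  have "0 < 1 + e / a" using assms by (simp add: field_simps)
  have split: "(a + e) / r = (a / r) * (1 + e / a)" using assms by (simp add: field_simps)
  have ln_split: "ln ((a + e) / r) = ln (a / r) + ln (1 + e / a)"
    unfolding split using assms \<open>0 < 1 + e / a\<close> by (intro ln_mult_pos) auto
  have "(a + e) * ln (1 + e / a) \<le> (a + e) * (e / a)"
    using ln_le_minus_one[OF \<open>0 < 1 + e / a\<close>] assms by (intro mult_left_mono) auto
  also have "\<dots> = e + e\<^sup>2 / a" using assms by (simp add: field_simps power2_eq_square)
  finally show ?thesis
    using assms unfolding ent_term_def ln_split by (simp add: algebra_simps)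
qed

lemma sum_eq_off_two_points:
  fixes f g :: "'a \<Rightarrow> 'b::ab_group_add"
  assumes "finite A" "p \<in> A" "q \<in> A" "p \<noteq> q" "\<forall>x\<in>A - {p, q}. g x = f x"
  shows "sum g A = sum f A + (g p - f p) + (g q - f q)"
proof -
  have rest: "sum g (A - {p, q}) = sum f (A - {p, q})"
    using assms(5) by (auto intro: sum.cong)
  have split: "sum h A = sum h (A - {p, q}) + h p + h q" for h :: "'a \<Rightarrow> 'b"
    using assms(1-4) by (subst sum.subset_diff[of "{p, q}"]) (auto simp: add.assoc)
  show ?thesis
    using split[of g] split[of f] rest by (simp add: algebra_simps)
qed

locale schroedinger_bridge =
  fixes n T :: nat and M :: "real mat" and mu0 nu :: "nat \<Rightarrow> real" and P :: "(nat \<Rightarrow> nat) \<Rightarrow> real"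
  assumes M_nonneg: "\<forall>i<n. \<forall>j<n. 0 \<le> M $$ (i, j)"
    and connected: "walk_connected n (\<lambda>i j. M $$ (i, j)) T"
    and mu0_pos: "\<forall>x<n. 0 < mu0 x"
    and nu_prob: "prob_dist_on {..<n} nu"
    and bridge: "is_schroedinger_bridge n T (ref_measure M mu0 T) nu nu P"
begin

abbreviation S :: "(nat \<Rightarrow> nat) set" where "S \<equiv> paths n T"
abbreviation R :: "(nat \<Rightarrow> nat) \<Rightarrow> real" where "R \<equiv> ref_measure M mu0 T"
abbreviation m :: "nat \<Rightarrow> nat \<Rightarrow> real" where "m \<equiv> \<lambda>i j. M $$ (i, j)"

lemma n_pos: "0 < n"
  using nu_prob by (auto simp: prob_dist_on_def intro: Nat.gr0I)

lemma nu_nonneg: "i < n \<Longrightarrow> 0 \<le> nu i"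
  using nu_prob by (auto simp: prob_dist_on_def)

lemma P_admissible: "bridge_admissible n T nu nu P"
  using bridge by (simp add: is_schroedinger_bridge_def)

lemma P_nonneg: "x \<in> S \<Longrightarrow> 0 \<le> P x"
  using P_admissible by (auto simp: bridge_admissible_def prob_dist_on_def)

lemma R_eq: "R x = mu0 (x 0) * walk_weight m T x"
  by (simp add: ref_measure_def walk_weight_def)

lemma R_nonneg: "x \<in> S \<Longrightarrow> 0 \<le> R x"
  using mu0_pos M_nonneg paths_range[of x n T] walk_weight_nonneg[of T x n m]
  by (simp add: R_eq less_imp_le)

lemma R_pos_iff:
  assumes "x \<in> S"
  shows "0 < R x \<longleftrightarrow> walk n m T x"
proof -
  have "0 < mu0 (x 0)"
    using mu0_pos paths_range[OF assms, of 0] by simp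
  then show ?thesis
    using M_nonneg paths_range[OF assms] walk_weight_pos_iff[of T x n m]
    by (simp add: R_eq zero_less_mult_iff)
qed

definition endpoint_mass :: "nat \<Rightarrow> nat \<Rightarrow> real" where
  "endpoint_mass a b = (\<Sum>x\<in>{x\<in>S. x 0 = a \<and> x T = b}. R x)"

lemma endpoint_mass_pos: "a < n \<Longrightarrow> b < n \<Longrightarrow> 0 < endpoint_mass a b"
proof -
  assume "a < n" "b < n"
  then obtain w where w: "walk n m T w" "w 0 = a" "w T = b"
    using connected unfolding walk_connected_def by blast
  let ?x = "restrict w {0..T}"
  have "?x \<in> {x\<in>S. x 0 = a \<and> x T = b}"
    using walk_restrict_in_paths[OF w(1)] w by auto
  moreover have "0 < R ?x"
    using R_pos_iff walk_restrict_in_paths[OF w(1)] w(1) by simp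
  ultimately show ?thesis
    unfolding endpoint_mass_def using R_nonneg by (intro sum_pos2) (auto simp: finite_paths)
qed

text \<open>Reference bridges between independent endpoints drawn from nu: an admissible law of
  finite entropy, which forces the bridge itself to have finite entropy.\<close>
definition product_bridge :: "(nat \<Rightarrow> nat) \<Rightarrow> real" where
  "product_bridge x = nu (x 0) * nu (x T) * R x / endpoint_mass (x 0) (x T)"

lemma product_bridge_endpoint_mass:
  assumes "a < n" "b < n"
  shows "(\<Sum>x\<in>{x\<in>S. x 0 = a \<and> x T = b}. product_bridge x) = nu a * nu b"
proof -
  have "(\<Sum>x\<in>{x\<in>S. x 0 = a \<and> x T = b}. product_bridge x)
      = (\<Sum>x\<in>{x\<in>S. x 0 = a \<and> x T = b}. nu a * nu b / endpoint_mass a b * R x)"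
    by (intro sum.cong) (auto simp: product_bridge_def)
  also have "\<dots> = nu a * nu b / endpoint_mass a b * endpoint_mass a b"
    by (simp add: endpoint_mass_def sum_distrib_left)
  also have "\<dots> = nu a * nu b"
    using endpoint_mass_pos[OF assms] by simp
  finally show ?thesis .
qed

lemma product_bridge_admissible: "bridge_admissible n T nu nu product_bridge"
proof -
  have nonneg: "\<forall>x\<in>S. 0 \<le> product_bridge x"
    using paths_range nu_nonneg R_nonneg endpoint_mass_pos
    by (auto simp: product_bridge_def intro!: divide_nonneg_pos)
  have nu_sum: "(\<Sum>b<n. nu b) = 1"
    using nu_prob by (simp add: prob_dist_on_def)
  have marg0: "marginal n T product_bridge 0 y = nu y" if "y < n" for y
  proof -
    have "marginal n T product_bridge 0 y = (\<Sum>b<n. nu y * nu b)"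
      unfolding marginal_def using that
      by (subst sum_paths_group[of T]) (auto intro!: sum.cong simp: product_bridge_endpoint_mass)
    then show ?thesis
      using nu_sum by (simp add: sum_distrib_left[symmetric])
  qed
  have margT: "marginal n T product_bridge T y = nu y" if "y < n" for y
  proof -
    have "marginal n T product_bridge T y
        = (\<Sum>b<n. \<Sum>x\<in>{x\<in>S. x 0 = b \<and> x T = y}. product_bridge x)"
      unfolding marginal_def
      by (subst sum_paths_group[of 0]) (auto intro!: sum.cong arg_cong[where f = "sum product_bridge"])
    also have "\<dots> = (\<Sum>b<n. nu b * nu y)"
      using that by (auto intro!: sum.cong simp: product_bridge_endpoint_mass)
    finally have "marginal n T product_bridge T y = (\<Sum>b<n. nu b * nu y)" .
    then show ?thesis
      using nu_sum by (simp add: sum_distrib_right[symmetric])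
  qed
  have "sum product_bridge S = (\<Sum>b<n. marginal n T product_bridge 0 b)"
    unfolding marginal_def by (rule sum_paths_group) auto
  then have "sum product_bridge S = 1"
    using marg0 nu_sum by simp
  with nonneg marg0 margT show ?thesis
    by (auto simp: bridge_admissible_def prob_dist_on_def)
qed

lemma bridge_support:
  assumes "x \<in> S" "P x \<noteq> 0"
  shows "R x \<noteq> 0"
proof -
  have "rel_entropy S P R \<le> rel_entropy S product_bridge R"
    using bridge product_bridge_admissible by (simp add: is_schroedinger_bridge_def)
  moreover have "rel_entropy S product_bridge R \<noteq> \<infinity>"
    by (simp add: rel_entropy_def product_bridge_def)
  ultimately have "rel_entropy S P R \<noteq> \<infinity>"
    by (metis ereal_infty_less_eq(1))
  with assms show ?thesis
    by (auto simp: rel_entropy_def split: if_splits)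
qed

lemma bridge_mass_shift:
  assumes p: "p \<in> S" and q: "q \<in> S" and "p \<noteq> q" and ends: "p 0 = q 0" "p T = q T"
    and R: "R p \<noteq> 0" "R q \<noteq> 0" and e: "0 \<le> P p + e" "0 \<le> P q - e"
  shows "ent_term (P p) (R p) + ent_term (P q) (R q)
    \<le> ent_term (P p + e) (R p) + ent_term (P q - e) (R q)"
proof -
  define Q where "Q = P(p := P p + e, q := P q - e)"
  have off: "\<forall>x\<in>A - {p, q}. Q x = P x" for A
    by (simp add: Q_def)
  have Q_pq: "Q p = P p + e" "Q q = P q - e"
    using \<open>p \<noteq> q\<close> by (auto simp: Q_def)
  have marginal_eq: "marginal n T Q t y = marginal n T P t y" if "p t = q t" for t y
  proof (cases "p t = y")
    case True
    with that p q show ?thesis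
      unfolding marginal_def
      by (subst sum_eq_off_two_points[OF _ _ _ \<open>p \<noteq> q\<close> off]) (auto simp: Q_pq finite_paths)
  next
    case False
    with that show ?thesis
      unfolding marginal_def by (intro sum.cong) (auto simp: Q_def)
  qed
  have "sum Q S = sum P S"
    by (subst sum_eq_off_two_points[OF finite_paths p q \<open>p \<noteq> q\<close> off]) (simp add: Q_pq)
  then have "bridge_admissible n T nu nu Q"
    using P_admissible marginal_eq[OF ends(1)] marginal_eq[OF ends(2)] e P_nonneg
    by (auto simp: bridge_admissible_def prob_dist_on_def Q_def)
  then have "rel_entropy S P R \<le> rel_entropy S Q R"
    using bridge by (simp add: is_schroedinger_bridge_def)
  moreover have "rel_entropy S P R = ereal (\<Sum>x\<in>S. ent_term (P x) (R x))"
    using bridge_support by (intro rel_entropy_eq_sum) blast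
  moreover have "rel_entropy S Q R = ereal (\<Sum>x\<in>S. ent_term (Q x) (R x))"
    using bridge_support R by (intro rel_entropy_eq_sum) (auto simp: Q_def)
  moreover have "(\<Sum>x\<in>S. ent_term (Q x) (R x)) = (\<Sum>x\<in>S. ent_term (P x) (R x))
      + (ent_term (P p + e) (R p) - ent_term (P p) (R p))
      + (ent_term (P q - e) (R q) - ent_term (P q) (R q))"
    using off[of S]
    by (subst sum_eq_off_two_points[OF finite_paths p q \<open>p \<noteq> q\<close>]) (auto simp: Q_pq)
  ultimately show ?thesis by simp
qed

text \<open>Moving a little mass e from the path with the larger ratio v = P/R to one with the
  smaller ratio u changes the entropy by e (ln u - ln v) + O(e^2) < 0.\<close>
lemma bridge_ratio_not_less:
  assumes p: "p \<in> S" and q: "q \<in> S" and ends: "p 0 = q 0" "p T = q T"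
    and Pp: "0 < P p" and Pq: "0 < P q"
  shows "\<not> P p / R p < P q / R q"
proof
  assume lt: "P p / R p < P q / R q"
  then have "p \<noteq> q" by auto
  have R: "0 < R p" "0 < R q"
    using bridge_support R_nonneg p q Pp Pq by (auto simp: order_less_le)
  define u where "u = P p / R p"
  define v where "v = P q / R q"
  have uv: "0 < u" "0 < v" "u < v"
    using Pp Pq R lt by (auto simp: u_def v_def)
  define d where "d = ln v - ln u"
  have "0 < d" using uv by (simp add: d_def)
  define c where "c = 1 / P p + 1 / P q"
  have "0 < c" using Pp Pq unfolding c_def by (intro add_pos_pos) auto
  define e where "e = min (P q / 2) (d / (2 * c))"
  have e: "0 < e" "e < P q" "e * c \<le> d / 2"
    using Pq \<open>0 < d\<close> \<open>0 < c\<close> by (auto simp: e_def min_def field_simps)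
  have "ent_term (P p) (R p) + ent_term (P q) (R q)
      \<le> ent_term (P p + e) (R p) + ent_term (P q - e) (R q)"
    using bridge_mass_shift[OF p q \<open>p \<noteq> q\<close> ends] R e Pp by simp
  also have "\<dots> \<le> ent_term (P p) (R p) + e * (ln u + 1) + e\<^sup>2 / P p
      + (ent_term (P q) (R q) + (- e) * (ln v + 1) + (- e)\<^sup>2 / P q)"
    using ent_term_perturb_le[OF Pp R(1), of e] ent_term_perturb_le[OF Pq R(2), of "- e"] e Pp
    by (simp add: u_def v_def)
  finally have "0 \<le> e * (e * c - d)"
    by (simp add: c_def d_def algebra_simps power2_eq_square add_divide_distrib)
  moreover have "e * (e * c - d) < 0"
    using e \<open>0 < d\<close> by (intro mult_pos_neg) auto
  ultimately show False by simp
qed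

lemma bridge_ratio_eq:
  assumes "p \<in> S" "q \<in> S" "p 0 = q 0" "p T = q T" "0 < P p" "0 < P q"
  shows "P p / R p = P q / R q"
  using bridge_ratio_not_less[OF assms] bridge_ratio_not_less[of q p] assms by fastforce

text \<open>Charging a path that R sees but P does not with mass e gains e ln e, which beats every
  linear loss.\<close>
lemma bridge_pos_of_ref_pos:
  assumes p: "p \<in> S" and q: "q \<in> S" and ends: "p 0 = q 0" "p T = q T"
    and "R p \<noteq> 0" and Pq: "0 < P q"
  shows "0 < P p"
proof (rule ccontr)
  assume "\<not> 0 < P p"
  then have Pp: "P p = 0" using P_nonneg[OF p] by simp
  then have "p \<noteq> q" using Pq by auto
  have R: "0 < R p" "0 < R q"
    using bridge_support R_nonneg p q Pq \<open>R p \<noteq> 0\<close> by (auto simp: order_less_le)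
  define v where "v = P q / R q"
  have "0 < v" using Pq R by (simp add: v_def)
  define e where "e = min (P q / 2) (R p * v / 2)"
  have e: "0 < e" "e < P q" "e / P q \<le> 1 / 2" "e / R p \<le> v / 2"
    using Pq \<open>0 < v\<close> R by (auto simp: e_def min_def field_simps)
  have "ent_term (P p) (R p) + ent_term (P q) (R q)
      \<le> ent_term (P p + e) (R p) + ent_term (P q - e) (R q)"
    using bridge_mass_shift[OF p q \<open>p \<noteq> q\<close> ends \<open>R p \<noteq> 0\<close>] R e Pp by simp
  also have "\<dots>
      \<le> e * ln (e / R p) + (ent_term (P q) (R q) + (- e) * (ln v + 1) + (- e)\<^sup>2 / P q)"
    using ent_term_perturb_le[OF Pq R(2), of "- e"] e Pp by (simp add: ent_term_def v_def)
  finally have "0 \<le> e * (ln (e / R p) - ln v - 1 + e / P q)"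
    using Pp by (simp add: ent_term_def algebra_simps power2_eq_square)
  moreover have "ln (e / R p) - ln v - 1 + e / P q < 0"
  proof -
    have "ln (e / R p) \<le> ln (v / 2)"
      using e R by (intro ln_mono) auto
    also have "\<dots> = ln v - ln 2"
      using \<open>0 < v\<close> by (simp add: ln_div)
    finally show ?thesis
      using e(3) ln_gt_zero[of "2::real"] by linarith
  qed
  ultimately show False
    using mult_pos_neg[OF e(1)] by force
qed

end

section \<open>Time-homogeneous bridges\<close>

locale homogeneous_bridge =
  fixes n N :: nat and M :: "real mat" and mu0 nu :: "nat \<Rightarrow> real"
    and P :: "(nat \<Rightarrow> nat) \<Rightarrow> real" and Tr :: "nat \<Rightarrow> nat \<Rightarrow> real"
  assumes N: "N > 1"
    and M_dim: "M \<in> carrier_mat n n"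
    and M_nonneg: "\<forall>i<n. \<forall>j<n. 0 \<le> M $$ (i, j)"
    and M_prim: "\<forall>i<n. \<forall>j<n. 0 < (M ^\<^sub>m N) $$ (i, j)"
    and mu0_pos: "\<forall>x<n. 0 < mu0 x"
    and nu_prob: "prob_dist_on {..<n} nu"
    and bridge: "is_schroedinger_bridge n (2 * N) (ref_measure M mu0 (2 * N)) nu nu P"
    and Tr_stochastic: "stochastic_matrix n Tr"
    and homogeneous: "\<forall>x\<in>paths n (2 * N). P x = nu (x 0) * (\<Prod>t<2 * N. Tr (x t) (x (Suc t)))"

lemma (in homogeneous_bridge) M_connected: "walk_connected n (\<lambda>i j. M $$ (i, j)) N"
  using M_dim M_nonneg M_prim by (rule walk_connected_mat_pow)

sublocale homogeneous_bridge \<subseteq> schroedinger_bridge n "2 * N" M mu0 nu P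
  by (intro schroedinger_bridge.intro M_nonneg walk_connected_double M_connected mu0_pos nu_prob bridge)

context homogeneous_bridge
begin

abbreviation T :: nat where "T \<equiv> 2 * N"

lemma Tr_nonneg: "\<forall>i<n. \<forall>j<n. 0 \<le> Tr i j"
  using Tr_stochastic by (simp add: stochastic_matrix_def)

lemma P_eq: "x \<in> S \<Longrightarrow> P x = nu (x 0) * walk_weight Tr T x"
  using homogeneous by (simp add: walk_weight_def)

lemma P_restrict: "walk n A T w \<Longrightarrow> P (restrict w {0..T}) = nu (w 0) * walk_weight Tr T w"
  by (simp only: P_eq[OF walk_restrict_in_paths] walk_weight_restrict) simp

lemma R_restrict: "R (restrict w {0..T}) = mu0 (w 0) * walk_weight m T w"
  by (simp only: R_eq walk_weight_restrict) simp

lemma P_pos_iff: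
  assumes "x \<in> S"
  shows "0 < P x \<longleftrightarrow> 0 < nu (x 0) \<and> walk n Tr T x"
proof -
  have "0 \<le> nu (x 0)" "0 \<le> walk_weight Tr T x"
    using nu_nonneg paths_range[OF assms] Tr_nonneg by (auto intro: walk_weight_nonneg)
  then show ?thesis
    using P_eq[OF assms] walk_weight_pos_iff[of T x n Tr] paths_range[OF assms] Tr_nonneg
    by (auto simp: zero_less_mult_iff)
qed

lemma Tr_walk_from_charged_start:
  assumes q: "q \<in> S" "0 < P q" and z: "z < n"
  shows "\<exists>w. walk n Tr N w \<and> w 0 = q 0 \<and> w N = z"
proof -
  have "q 0 < n" "q T < n"
    using paths_range[OF q(1)] by auto
  then obtain u v where u: "walk n m N u" "u 0 = q 0" "u N = z"
    and v: "walk n m N v" "v 0 = z" "v N = q T"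
    using M_connected z unfolding walk_connected_def by meson
  define w where "w = join_at u N v"
  have w: "walk n m T w" "w 0 = q 0" "w T = q T" "w N = z"
    using walk_join_at_double[OF u(1) v(1)] u v by (simp_all add: w_def)
  have x: "restrict w {0..T} \<in> S"
    using w(1) by (rule walk_restrict_in_paths)
  then have "0 < R (restrict w {0..T})"
    using R_pos_iff w(1) by simp
  then have "0 < P (restrict w {0..T})"
    using bridge_pos_of_ref_pos[OF x q(1)] w q(2) by simp
  then have "walk n Tr T w"
    using P_pos_iff[OF x] by simp
  with w show ?thesis
    by (intro exI[of _ w]) (auto intro: walk_mono)
qed

lemma charged_path_through:
  assumes "t \<in> {0, T}" "s < n" "0 < nu s"
  shows "\<exists>q\<in>S. q t = s \<and> 0 < P q"
proof (rule ccontr)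
  assume "\<not> ?thesis"
  then have "marginal n T P t s \<le> 0"
    unfolding marginal_def by (intro sum_nonpos) (auto simp: not_less)
  moreover have "marginal n T P t s = nu s"
    using P_admissible assms by (auto simp: bridge_admissible_def)
  ultimately show False
    using assms by simp
qed

lemma ex_charged_path: "\<exists>q\<in>S. 0 < P q"
proof (rule ccontr)
  assume "\<not> ?thesis"
  then have "sum P S \<le> 0"
    by (intro sum_nonpos) (auto simp: not_less)
  with P_admissible show False
    by (simp add: bridge_admissible_def prob_dist_on_def)
qed

lemma nu_pos: "c < n \<Longrightarrow> 0 < nu c"
proof -
  assume c: "c < n"
  obtain q where q: "q \<in> S" "0 < P q"
    using ex_charged_path by blast
  then have q0: "q 0 < n" "0 < nu (q 0)"
    using paths_range P_pos_iff by auto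
  then obtain r where r: "r \<in> S" "r T = q 0" "0 < P r"
    using charged_path_through[of T "q 0"] by auto
  obtain u where u: "walk n Tr N u" "u 0 = r 0" "u N = q 0"
    using Tr_walk_from_charged_start[OF r(1) r(3) q0(1)] by blast
  obtain v where v: "walk n Tr N v" "v 0 = q 0" "v N = c"
    using Tr_walk_from_charged_start[OF q c] by blast
  define w where "w = join_at u N v"
  have w: "walk n Tr T w" "w 0 = r 0" "w T = c"
    using walk_join_at_double[OF u(1) v(1)] u v by (simp_all add: w_def)
  have x: "restrict w {0..T} \<in> S"
    using w(1) by (rule walk_restrict_in_paths)
  have "0 < P (restrict w {0..T})"
    using P_pos_iff[OF x] P_pos_iff[OF r(1)] r(3) w by simp
  also have "\<dots> \<le> marginal n T P T c"
    unfolding marginal_def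
  proof (rule member_le_sum)
    show "restrict w {0..T} \<in> {x \<in> S. x T = c}"
      using w(3) by (intro CollectI conjI x) simp
  qed (simp_all add: P_nonneg finite_paths)
  also have "\<dots> = nu c"
    using P_admissible c by (simp add: bridge_admissible_def)
  finally show ?thesis .
qed

lemma Tr_connected: "walk_connected n Tr N"
  unfolding walk_connected_def
proof (intro allI impI)
  fix s z assume "s < n" "z < n"
  then obtain q where "q \<in> S" "q 0 = s" "0 < P q"
    using charged_path_through[of 0 s] nu_pos by auto
  with \<open>z < n\<close> show "\<exists>w. walk n Tr N w \<and> w 0 = s \<and> w N = z"
    using Tr_walk_from_charged_start by blast
qed

lemma walk_m_iff_walk_Tr:
  assumes range: "\<And>t. t \<le> T \<Longrightarrow> w t < n"
  shows "walk n m T w \<longleftrightarrow> walk n Tr T w"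
proof -
  let ?x = "restrict w {0..T}"
  have x: "?x \<in> S"
    using range by (rule restrict_in_paths)
  have "walk n m T w \<longleftrightarrow> 0 < R ?x"
    by (simp only: R_pos_iff[OF x] walk_restrict)
  also have "\<dots> \<longleftrightarrow> 0 < P ?x"
  proof
    assume "0 < R ?x"
    have "w 0 < n" "w T < n"
      using range by auto
    then obtain v where v: "walk n Tr T v" "v 0 = w 0" "v T = w T"
      using walk_connected_double[OF Tr_connected] unfolding walk_connected_def by meson
    have y: "restrict v {0..T} \<in> S"
      using v(1) by (rule walk_restrict_in_paths)
    then have "0 < P (restrict v {0..T})"
      using v nu_pos range by (simp only: P_pos_iff[OF y] walk_restrict) simp
    with \<open>0 < R ?x\<close> show "0 < P ?x"
      using bridge_pos_of_ref_pos[OF x y] v by simp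
  next
    assume "0 < P ?x"
    then have "R ?x \<noteq> 0"
      by (intro bridge_support[OF x]) simp
    then show "0 < R ?x"
      using R_nonneg[OF x] by linarith
  qed
  also have "\<dots> \<longleftrightarrow> walk n Tr T w"
    using nu_pos range by (simp only: P_pos_iff[OF x] walk_restrict) simp
  finally show ?thesis .
qed

lemma Tr_pos_iff:
  assumes "x < n" "y < n"
  shows "0 < Tr x y \<longleftrightarrow> 0 < m x y"
proof -
  have T: "T = Suc (T - 1)"
    using N by simp
  have first_edge_pos: "0 < A x y"
    if conn: "walk_connected n B T" and pos: "0 < B x y"
      and preserve: "\<And>w. (\<And>t. t \<le> T \<Longrightarrow> w t < n) \<Longrightarrow> walk n B T w \<Longrightarrow> walk n A T w"
    for A B
  proof -
    obtain v where "walk n B (T - 1) v" "v 0 = y"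
      using walk_connected_from[OF conn assms(2), of "T - 1"] by auto
    then have "walk n B T (prepend x v)"
      using walk_prepend[of n B "T - 1" v x] pos assms T by simp
    then have "walk n A T (prepend x v)"
      by (intro preserve[of "prepend x v"]) (auto intro: walk_range)
    then show ?thesis
      using walk_step[of n A T "prepend x v" 0] \<open>v 0 = y\<close> T by simp
  qed
  show ?thesis
  proof
    assume "0 < Tr x y"
    with walk_connected_double[OF Tr_connected] show "0 < m x y"
      by (rule first_edge_pos) (use walk_m_iff_walk_Tr in blast)
  next
    assume "0 < m x y"
    with connected show "0 < Tr x y"
      by (rule first_edge_pos) (use walk_m_iff_walk_Tr in blast)
  qed
qed

lemma walk_m_charged: "walk n m T w \<Longrightarrow> 0 < P (restrict w {0..T})"
  using P_restrict[of m w] walk_m_iff_walk_Tr[of w] walk_range[of n m T w] nu_pos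
    walk_weight_pos[of n Tr T w Tr]
  by (simp add: zero_less_mult_iff)

definition ratio :: "nat \<Rightarrow> nat \<Rightarrow> real" where
  "ratio x y = Tr x y / m x y"

lemma walk_weight_ratio: "walk_weight ratio L w = walk_weight Tr L w / walk_weight m L w"
  by (simp add: walk_weight_def ratio_def prod_dividef)

lemma ratio_weight_pos: "walk n m L w \<Longrightarrow> 0 < walk_weight ratio L w"
  by (rule walk_weight_pos) (auto simp: ratio_def Tr_pos_iff)

lemma ratio_weight_eq:
  assumes u: "walk n m T u" and w: "walk n m T w" and ends: "u 0 = w 0" "u T = w T"
  shows "walk_weight ratio T u = walk_weight ratio T w"
proof -
  have P_over_R: "P (restrict v {0..T}) / R (restrict v {0..T})
      = nu (v 0) / mu0 (v 0) * walk_weight ratio T v" if "walk n m T v" for v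
    using P_restrict[OF that] R_restrict[of v] by (simp add: walk_weight_ratio)
  have "P (restrict u {0..T}) / R (restrict u {0..T})
      = P (restrict w {0..T}) / R (restrict w {0..T})"
    using bridge_ratio_eq[OF walk_restrict_in_paths[OF u] walk_restrict_in_paths[OF w]]
      walk_m_charged[OF u] walk_m_charged[OF w] ends by simp
  moreover have "nu (u 0) \<noteq> 0" "mu0 (u 0) \<noteq> 0"
    using nu_pos mu0_pos walk_range[OF u, of 0] by (auto simp: less_imp_neq[symmetric])
  ultimately show ?thesis
    using P_over_R[OF u] P_over_R[OF w] ends by simp
qed

definition some_walk :: "nat \<Rightarrow> nat \<Rightarrow> nat \<Rightarrow> nat" where
  "some_walk x y = (SOME w. walk n m N w \<and> w 0 = x \<and> w N = y)"

lemma some_walk: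
  assumes "x < n" "y < n"
  shows "walk n m N (some_walk x y)" "some_walk x y 0 = x" "some_walk x y N = y"
proof -
  have "\<exists>w. walk n m N w \<and> w 0 = x \<and> w N = y"
    using M_connected assms unfolding walk_connected_def by blast
  then show "walk n m N (some_walk x y)" "some_walk x y 0 = x" "some_walk x y N = y"
    unfolding some_walk_def by (metis (mono_tags, lifting) someI_ex)+
qed

definition block_weight :: "nat \<Rightarrow> nat \<Rightarrow> real" where
  "block_weight x y = walk_weight ratio N (some_walk x y)"

definition potential :: "nat \<Rightarrow> real" where
  "potential y = block_weight 0 y"

text \<open>Prefixing a common block turns two blocks with the same ends into walks of length T.\<close>
lemma ratio_weight_block:
  assumes u: "walk n m N u"
  shows "walk_weight ratio N u = block_weight (u 0) (u N)"
proof -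
  have ends: "u 0 < n" "u N < n"
    using walk_range[OF u] by auto
  let ?a = "some_walk 0 (u 0)" and ?v = "some_walk (u 0) (u N)"
  have a: "walk n m N ?a" "?a 0 = 0" "?a N = u 0" and v: "walk n m N ?v" "?v 0 = u 0" "?v N = u N"
    using some_walk n_pos ends by auto
  have "walk_weight ratio N ?a * walk_weight ratio N u
      = walk_weight ratio N ?a * walk_weight ratio N ?v"
    using ratio_weight_eq[OF walk_join_at_double[OF a(1) u] walk_join_at_double[OF a(1) v(1)]]
      walk_weight_join_at_double[of ?a N u ratio] walk_weight_join_at_double[of ?a N ?v ratio] a v
    by simp
  then show ?thesis
    using ratio_weight_pos[OF a(1)] by (simp add: block_weight_def)
qed

lemma potential_pos: "y < n \<Longrightarrow> 0 < potential y"
  using some_walk[OF n_pos] ratio_weight_pos by (simp add: potential_def block_weight_def)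

lemma block_weight_eq:
  assumes "x < n" "y < n"
  shows "block_weight x y = potential 0 * potential y / potential x"
proof -
  let ?a = "some_walk 0 x" and ?b = "some_walk x y" and ?c = "some_walk 0 0" and ?d = "some_walk 0 y"
  have a: "walk n m N ?a" "?a 0 = 0" "?a N = x" and b: "walk n m N ?b" "?b 0 = x" "?b N = y"
    and c: "walk n m N ?c" "?c 0 = 0" "?c N = 0" and d: "walk n m N ?d" "?d 0 = 0" "?d N = y"
    using some_walk n_pos assms by auto
  have "walk_weight ratio N ?a * walk_weight ratio N ?b
      = walk_weight ratio N ?c * walk_weight ratio N ?d"
    using ratio_weight_eq[OF walk_join_at_double[OF a(1) b(1)] walk_join_at_double[OF c(1) d(1)]]
      walk_weight_join_at_double[of ?a N ?b ratio] walk_weight_join_at_double[of ?c N ?d ratio] a b c d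
    by simp
  then have "potential x * block_weight x y = potential 0 * potential y"
    by (simp add: potential_def block_weight_def)
  then show ?thesis
    using potential_pos[OF assms(1)] by (simp add: field_simps)
qed

lemma ratio_weight_N:
  "walk n m N u \<Longrightarrow> walk_weight ratio N u = potential 0 * potential (u N) / potential (u 0)"
  using ratio_weight_block block_weight_eq walk_range[of n m N u] by simp

lemma ratio_potential_depends_on_target:
  assumes "x < n" "x' < n" "y < n" "0 < m x y" "0 < m x' y"
  shows "ratio x y * potential x = ratio x' y * potential x'"
proof -
  have N1: "N = Suc (N - 1)"
    using N by simp
  obtain s where s: "walk n m (N - 1) s" "s 0 = y"
    using walk_connected_from[OF M_connected \<open>y < n\<close>, of "N - 1"] by auto
  have "ratio z y * potential z = potential 0 * potential (s (N - 1)) / walk_weight ratio (N - 1) s"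
    if "z < n" "0 < m z y" for z
  proof -
    have "walk n m N (prepend z s)"
      using walk_prepend[OF s(1) that(1)] that(2) s(2) N1 by simp
    then have "ratio z y * walk_weight ratio (N - 1) s
        = potential 0 * potential (s (N - 1)) / potential z"
      using ratio_weight_N[of "prepend z s"] walk_weight_prepend[of ratio "N - 1" z s] s(2) N1
      by (metis prepend_0 prepend_Suc)
    then show ?thesis
      using ratio_weight_pos[OF s(1)] potential_pos[OF that(1)] by (simp add: field_simps)
  qed
  then show ?thesis
    using assms by simp
qed

lemma ratio_potential_first_eq_last:
  assumes w: "walk n m (Suc N) w"
  shows "ratio (w 0) (w 1) * potential (w 0) / potential (w 1)
    = ratio (w N) (w (Suc N)) * potential (w N) / potential (w (Suc N))"
proof -
  have "ratio (w 0) (w 1) * walk_weight ratio N (\<lambda>t. w (Suc t))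
      = walk_weight ratio N w * ratio (w N) (w (Suc N))"
    using walk_weight_shift[of ratio N w] walk_weight_Suc[of ratio N w] by simp
  moreover have "walk_weight ratio N (\<lambda>t. w (Suc t))
      = potential 0 * potential (w (Suc N)) / potential (w 1)"
    using ratio_weight_N[OF walk_shift[OF w]] by simp
  moreover have "walk_weight ratio N w = potential 0 * potential (w N) / potential (w 0)"
    using ratio_weight_N[OF walk_mono[OF w]] by simp
  moreover have "0 < potential 0" "0 < potential (w 0)" "0 < potential (w 1)"
      "0 < potential (w N)" "0 < potential (w (Suc N))"
    using potential_pos n_pos walk_range[OF w] by auto
  ultimately show ?thesis
    by (simp add: field_simps)
qed

lemma ratio_potential_const:
  assumes "x < n" "y < n" "0 < m x y" and "x' < n" "y' < n" "0 < m x' y'"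
  shows "ratio x y * potential x / potential y = ratio x' y' * potential x' / potential y'"
proof -
  have N1: "N = Suc (N - 1)"
    using N by simp
  let ?a = "some_walk 0 y" and ?u = "some_walk y y'"
  have a: "walk n m N ?a" "?a N = y" and u: "walk n m N ?u" "?u 0 = y" "?u N = y'"
    using some_walk n_pos assms by auto
  define x0 where "x0 = ?a (N - 1)"
  have x0: "x0 < n" "0 < m x0 y"
    using walk_range[OF a(1), of "N - 1"] walk_step[OF a(1), of "N - 1"] a(2) N1
    by (simp_all add: x0_def)
  define w0 where "w0 = ?u (N - 1)"
  have w0: "w0 < n" "0 < m w0 y'"
    using walk_range[OF u(1), of "N - 1"] walk_step[OF u(1), of "N - 1"] u(3) N1
    by (simp_all add: w0_def)
  have "walk n m (Suc N) (prepend x0 ?u)"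
    using walk_prepend[OF u(1) x0(1)] x0(2) u(2) by simp
  then have "ratio x0 y * potential x0 / potential y = ratio w0 y' * potential w0 / potential y'"
    using ratio_potential_first_eq_last[of "prepend x0 ?u"] u N1
    by (metis One_nat_def prepend_0 prepend_Suc w0_def)
  moreover have "ratio x y * potential x = ratio x0 y * potential x0"
    using ratio_potential_depends_on_target assms x0 by blast
  moreover have "ratio x' y' * potential x' = ratio w0 y' * potential w0"
    using ratio_potential_depends_on_target assms w0 by blast
  ultimately show ?thesis
    by simp
qed

lemma Tr_gauge: "\<exists>c p. (\<forall>i<n. 0 < p i) \<and> (\<forall>x<n. \<forall>y<n. Tr x y = m x y * c * p y / p x)"
proof -
  let ?a = "some_walk 0 0"
  have a: "walk n m N ?a"
    using some_walk n_pos by auto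
  define x0 y0 where "x0 = ?a 0" and "y0 = ?a 1"
  have edge: "x0 < n" "y0 < n" "0 < m x0 y0"
    using walk_range[OF a, of 0] walk_range[OF a, of 1] walk_step[OF a, of 0] N
    by (simp_all add: x0_def y0_def)
  define c where "c = ratio x0 y0 * potential x0 / potential y0"
  have "Tr x y = m x y * c * potential y / potential x" if "x < n" "y < n" for x y
  proof (cases "0 < m x y")
    case True
    then have "ratio x y = c * potential y / potential x"
      using ratio_potential_const[OF that True edge]
        potential_pos[OF that(1)] potential_pos[OF that(2)] potential_pos[OF edge(2)]
      by (simp add: c_def field_simps)
    with True show ?thesis
      by (simp add: ratio_def field_simps)
  next
    case False
    then have "m x y = 0" "Tr x y = 0"
      using M_nonneg Tr_nonneg Tr_pos_iff that by (auto simp: order_less_le)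
    then show ?thesis by simp
  qed
  with potential_pos show ?thesis by blast
qed

lemma nu_evolve_invariant: "\<forall>b<n. evolve n Tr nu T b = nu b"
proof (intro allI impI)
  fix b assume "b < n"
  have "nu b = marginal n T P T b"
    using P_admissible \<open>b < n\<close> by (simp add: bridge_admissible_def)
  also have "\<dots> = (\<Sum>x\<in>{x\<in>S. x T = b}. nu (x 0) * walk_weight Tr T x)"
    unfolding marginal_def by (intro sum.cong) (auto simp: P_eq)
  also have "\<dots> = evolve n Tr nu T b"
    using \<open>b < n\<close> by (rule sum_paths_ending_at)
  finally show "evolve n Tr nu T b = nu b" ..
qed

end

lemma mult_mat_vec_eigen_sum:
  assumes "A \<in> carrier_mat n n" "v \<in> carrier_vec n" "A *\<^sub>v v = c \<cdot>\<^sub>v v" "i < n"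
  shows "(\<Sum>j<n. A $$ (i, j) * v $ j) = c * v $ i"
proof -
  have "(A *\<^sub>v v) $ i = (\<Sum>j<n. A $$ (i, j) * v $ j)"
    using assms(1,2,4) by (simp add: scalar_prod_def lessThan_atLeast0)
  moreover have "(c \<cdot>\<^sub>v v) $ i = c * v $ i"
    using assms by simp
  ultimately show ?thesis
    using assms(3) by simp
qed

lemma transpose_mult_mat_vec_eigen_sum:
  fixes A :: "'a::comm_semiring_0 mat"
  assumes "A \<in> carrier_mat n n" "v \<in> carrier_vec n" "transpose_mat A *\<^sub>v v = c \<cdot>\<^sub>v v" "j < n"
  shows "(\<Sum>i<n. v $ i * A $$ (i, j)) = c * v $ j"
proof -
  have "(\<Sum>i<n. v $ i * A $$ (i, j)) = (\<Sum>i<n. transpose_mat A $$ (j, i) * v $ i)"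
    using assms by (intro sum.cong) (auto simp: mult.commute)
  also have "\<dots> = c * v $ j"
    using assms by (intro mult_mat_vec_eigen_sum) auto
  finally show ?thesis .
qed

theorem theorem3p4:
  fixes n N :: nat and M :: "real mat" and phi phihat :: "real vec"
    and mu0 nu :: "nat \<Rightarrow> real" and P :: "(nat \<Rightarrow> nat) \<Rightarrow> real"
    and Tr :: "nat \<Rightarrow> nat \<Rightarrow> real"
  assumes N: "N > 1"
    and M_dim: "M \<in> carrier_mat n n"
    and M_nonneg: "\<forall>i<n. \<forall>j<n. 0 \<le> M $$ (i, j)"
    and M_prim: "\<forall>i<n. \<forall>j<n. 0 < (M ^\<^sub>m N) $$ (i, j)"
    and phi_dim: "phi \<in> carrier_vec n" and phihat_dim: "phihat \<in> carrier_vec n"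
    and phi_pos: "\<forall>i<n. 0 < phi $ i" and phihat_pos: "\<forall>i<n. 0 < phihat $ i"
    and phi_right: "M *\<^sub>v phi = spectral_radius (map_mat complex_of_real M) \<cdot>\<^sub>v phi"
    and phihat_left: "transpose_mat M *\<^sub>v phihat
                        = spectral_radius (map_mat complex_of_real M) \<cdot>\<^sub>v phihat"
    and normalized: "(\<Sum>x<n. phi $ x * phihat $ x) = 1"
    and mu0_pos: "\<forall>x<n. 0 < mu0 x"
    and nu_prob: "prob_dist_on {..<n} nu"
    and bridge: "is_schroedinger_bridge n (2 * N) (ref_measure M mu0 (2 * N)) nu nu P"
    and Pi_stoch: "stochastic_matrix n Tr"
    and homogeneous: "\<forall>x\<in>paths n (2 * N). P x = nu (x 0) * (\<Prod>t<2 * N. Tr (x t) (x (Suc t)))"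
  shows "(\<forall>x<n. nu x = phi $ x * phihat $ x) \<and>
         (\<forall>x<n. \<forall>y<n. Tr x y = M $$ (x, y) * phi $ y
             / (spectral_radius (map_mat complex_of_real M) * phi $ x))"
proof -
  interpret hb: homogeneous_bridge n N M mu0 nu P Tr
    using N M_dim M_nonneg M_prim mu0_pos nu_prob bridge Pi_stoch homogeneous
    by (rule homogeneous_bridge.intro)
  define lam where "lam = spectral_radius (map_mat complex_of_real M)"
  have phi_eig: "\<forall>i<n. (\<Sum>j<n. M $$ (i, j) * phi $ j) = lam * phi $ i"
    using mult_mat_vec_eigen_sum[OF M_dim phi_dim phi_right] by (simp add: lam_def)
  have phihat_eig: "\<forall>j<n. (\<Sum>i<n. phihat $ i * M $$ (i, j)) = lam * phihat $ j"
    using transpose_mult_mat_vec_eigen_sum[OF M_dim phihat_dim phihat_left] by (simp add: lam_def)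
  obtain c p where p: "\<forall>i<n. 0 < p i"
    and gauge: "\<forall>x<n. \<forall>y<n. Tr x y = M $$ (x, y) * c * p y / p x"
    using hb.Tr_gauge by blast
  have doob: "\<forall>x<n. \<forall>y<n. Tr x y = M $$ (x, y) * phi $ y / (lam * phi $ x)"
    using doob_transform_unique[OF hb.n_pos M_nonneg hb.M_connected phi_pos phi_eig
        phihat_pos phihat_eig Pi_stoch p gauge] .
  have "\<forall>b<n. evolve n Tr (\<lambda>i. phi $ i * phihat $ i) (2 * N) b = phi $ b * phihat $ b"
    by (intro allI impI doob_transform_invariant[OF phi_pos phihat_eig Pi_stoch doob])
  moreover have "\<forall>i<n. 0 < phi $ i * phihat $ i"
    using phi_pos phihat_pos by simp
  moreover have "(\<Sum>i<n. nu i) = (\<Sum>i<n. phi $ i * phihat $ i)"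
    using nu_prob normalized by (simp add: prob_dist_on_def)
  ultimately have "\<forall>x<n. nu x = phi $ x * phihat $ x"
    by (rule evolve_invariant_unique[OF hb.Tr_nonneg walk_connected_double[OF hb.Tr_connected]
        hb.nu_evolve_invariant])
  with doob show ?thesis
    by (simp add: lam_def)
qed

end
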